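(* Let $n>1$ and $0 < t \leq n$. Let $R$ be a randomized $t$-query algorithm on $n$ input bits, and suppose $K \subseteq \{0,1\}^n$ is a set with $|K| > 2^{n-1}$ such that $\Pr[R(y) = \mathrm{PAR}(y)] \geq 2/3$ for every $y \in K$, where $\mathrm{PAR}(y)=y_1\oplus\cdots\oplus y_n$. Then there exists a Bob-strategy such that, if $(\pi,z)$ is drawn uniformly from $S_n\times\{0,1\}$ and $\mathbf{b} = b(\pi,z)$ is the resulting clue string, then \[ \Pr_{\pi,z,R}\big[\text{the execution of } R \text{ on } \mathbf{b} \text{ is search-successful}\big] \geq 1/3 . \]
   Context: A randomized $t$-query algorithm is a probability distribution over deterministic decision trees of depth $t$ on input variables $b_1,\dots,b_n$, each outputting a bit. Let $S_n$ be the set of permutations $\pi=(\pi(1),\dots,\pi(n))$ of $[n]$. A Bob-strategy is a family of functions $F_t : S_n \to \{0,1\}$, $t=1,\dots,n-1$, where each $F_t(\pi)$ depends only on $\pi(1),\dots,\pi(t)$. For a fixed Bob-strategy, $\pi\in S_n$ and $z\in\{0,1\}$, define $b(\pi,z)\in\{0,1\}^n$ by $b_j = F_t(\pi)$ if $j=\pi(t)$ for some $t<n$, and $b_j=z$ if $j=\pi(n)$. An execution of the randomized algorithm $R$ on $\mathbf{b}=b(\pi,z)$ is search-successful if the set of coordinates queried by $R$ in that execution contains $\pi(n)$. *)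

theory Defs
  imports "HOL-Probability.Probability" "HOL-Combinatorics.Multiset_Permutations"
begin

text \<open>Deterministic decision trees: a leaf outputs a bit; an inner node
  Node i l r queries input bit i (0-based) and continues in l if the bit is
  False (0) and in r if it is True (1).\<close>
datatype dtree = Leaf bool | Node nat dtree dtree

fun depth :: "dtree \<Rightarrow> nat" where
  "depth (Leaf _) = 0"
| "depth (Node _ l r) = Suc (max (depth l) (depth r))"

fun vars :: "dtree \<Rightarrow> nat set" where
  "vars (Leaf _) = {}"
| "vars (Node i l r) = insert i (vars l \<union> vars r)"

definition valid_tree :: "nat \<Rightarrow> nat \<Rightarrow> dtree \<Rightarrow> bool" where
  "valid_tree n t T \<longleftrightarrow> depth T \<le> t \<and> vars T \<subseteq> {..<n}"

fun eval :: "dtree \<Rightarrow> bool list \<Rightarrow> bool" where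
  "eval (Leaf b) y = b"
| "eval (Node i l r) y = (if y ! i then eval r y else eval l y)"

fun queried :: "dtree \<Rightarrow> bool list \<Rightarrow> nat set" where
  "queried (Leaf _) y = {}"
| "queried (Node i l r) y = insert i (queried (if y ! i then r else l) y)"

definition rand_alg :: "nat \<Rightarrow> nat \<Rightarrow> dtree pmf \<Rightarrow> bool" where
  "rand_alg n t R \<longleftrightarrow> (\<forall>T \<in> set_pmf R. valid_tree n t T)"

definition par :: "bool list \<Rightarrow> bool" where
  "par y = odd (length (filter id y))"

text \<open>Permutations of [n] as lists: pi ! (s-1) is pi(s). Coordinates are 0-based.\<close>
abbreviation perms :: "nat \<Rightarrow> nat list set" where
  "perms n \<equiv> permutations_of_set {..<n}"

definition bob_strategy :: "nat \<Rightarrow> (nat \<Rightarrow> nat list \<Rightarrow> bool) \<Rightarrow> bool" where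
  "bob_strategy n F \<longleftrightarrow>
     (\<forall>s \<in> {1..n-1}. \<forall>\<pi> \<in> perms n. \<forall>\<pi>' \<in> perms n.
        take s \<pi> = take s \<pi>' \<longrightarrow> F s \<pi> = F s \<pi>')"

text \<open>Clue string b(pi,z): b_j = F_s(pi) if j = pi(s), s < n; b_{pi(n)} = z.\<close>
definition clue :: "nat \<Rightarrow> (nat \<Rightarrow> nat list \<Rightarrow> bool) \<Rightarrow> nat list \<Rightarrow> bool \<Rightarrow> bool list" where
  "clue n F \<pi> z = map (\<lambda>j. if j = \<pi> ! (n - 1) then z
                           else F (Suc (THE k. k < n \<and> \<pi> ! k = j)) \<pi>) [0..<n]"

end

theory Submission
  imports Defs
begin

text \<open>Bob answers greedily: revealing the coordinates in the order of \<pi>, he always gives the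
  answer that keeps at least half of the inputs of K still consistent with his answers. As
  |K| > 2^(n-1), after n - 1 answers at least two inputs of K remain, so both completions
  b(\<pi>,0) and b(\<pi>,1) of the clue string lie in K. They differ only at \<pi>(n), hence have
  different parity. With probability at least 2/3 + 2/3 - 1 the algorithm is correct on both,
  and then it must query \<pi>(n), for otherwise its runs on the two strings coincide.\<close>

lemma par_list_update:
  assumes "i < length y"
  shows "par (y[i := b]) \<longleftrightarrow> (par y \<longleftrightarrow> y ! i = b)"
proof -
  define l where "l = length (filter id (take i y)) + length (filter id (drop (Suc i) y))"
  have "length (filter id (y[i := b])) = l + of_bool b"
    using assms by (simp add: upd_conv_take_nth_drop l_def)
  moreover have "length (filter id y) = l + of_bool (y ! i)"
    using assms by (subst id_take_nth_drop[of i y]) (simp_all add: l_def)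
  ultimately show ?thesis
    unfolding par_def by auto
qed

lemma measure_pmf_Int_ge:
  "measure_pmf.prob M A + measure_pmf.prob M B - 1 \<le> measure_pmf.prob M (A \<inter> B)"
proof -
  have "measure_pmf.prob M (A \<union> B) = measure_pmf.prob M A + measure_pmf.prob M B - measure_pmf.prob M (A \<inter> B)"
    by (simp add: measure_pmf.finite_measure_Union' measure_pmf.finite_measure_Diff' Int_commute)
  then show ?thesis
    using measure_pmf.prob_le_1[of M "A \<union> B"] by linarith
qed

lemma measure_bind_pmf_ge:
  assumes "\<And>x. x \<in> set_pmf M \<Longrightarrow> c \<le> measure_pmf.prob (f x) A"
  shows "c \<le> measure_pmf.prob (bind_pmf M f) A"
proof -
  have "ennreal c \<le> (\<integral>\<^sup>+x. emeasure (f x) A \<partial>M)"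
    using assms by (intro measure_pmf.nn_integral_ge_const)
      (simp add: AE_measure_pmf_iff measure_pmf.emeasure_eq_measure)
  also have "\<dots> = ennreal (measure_pmf.prob (bind_pmf M f) A)"
    by (simp flip: measure_pmf.emeasure_eq_measure)
  finally show ?thesis by (simp add: ennreal_le_iff)
qed

lemma eval_queried_cong:
  assumes "\<forall>j \<in> queried T y. y' ! j = y ! j"
  shows "eval T y' = eval T y \<and> queried T y' = queried T y"
  using assms by (induction T) auto

lemma prob_queried_ge_sensitive:
  fixes R :: "dtree pmf"
  assumes "i < length y"
  defines "y' \<equiv> y[i := \<not> y ! i]"
  shows "measure_pmf.prob R {T. eval T y = par y} + measure_pmf.prob R {T. eval T y' = par y'} - 1
           \<le> measure_pmf.prob R {T. i \<in> queried T y}"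
proof -
  have "par y' \<noteq> par y"
    using par_list_update[OF assms(1)] by (auto simp: y'_def)
  moreover have "eval T y' = eval T y" if "i \<notin> queried T y" for T
  proof -
    have "\<forall>j \<in> queried T y. y' ! j = y ! j"
      using that unfolding y'_def by (metis nth_list_update_neq)
    then show ?thesis
      using eval_queried_cong by blast
  qed
  ultimately have "{T. eval T y = par y} \<inter> {T. eval T y' = par y'} \<subseteq> {T. i \<in> queried T y}"
    by auto
  then have "measure_pmf.prob R ({T. eval T y = par y} \<inter> {T. eval T y' = par y'})
              \<le> measure_pmf.prob R {T. i \<in> queried T y}"
    by (simp add: measure_pmf.finite_measure_mono)
  with measure_pmf_Int_ge show ?thesis
    by (rule order_trans)
qed

definition consistent :: "bool list set \<Rightarrow> nat list \<Rightarrow> bool list \<Rightarrow> bool list set" where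
  "consistent K p bs = {y \<in> K. \<forall>k < length bs. y ! (p ! k) = bs ! k}"

fun greedy_bits :: "bool list set \<Rightarrow> nat list \<Rightarrow> nat \<Rightarrow> bool list" where
  "greedy_bits K p 0 = []"
| "greedy_bits K p (Suc s) =
     (let bs = greedy_bits K p s
      in bs @ [card (consistent K p (bs @ [False])) \<le> card (consistent K p (bs @ [True]))])"

lemma length_greedy_bits [simp]: "length (greedy_bits K p s) = s"
  by (induction s) (simp_all add: Let_def)

lemma take_greedy_bits: "s \<le> s' \<Longrightarrow> take s (greedy_bits K p s') = greedy_bits K p s"
  by (induction s' rule: dec_induct) (simp_all add: Let_def)

lemma consistent_cong:
  "take (length bs) p = take (length bs) p' \<Longrightarrow> consistent K p bs = consistent K p' bs"
  unfolding consistent_def by (metis nth_take)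

lemma greedy_bits_cong: "take s p = take s p' \<Longrightarrow> greedy_bits K p s = greedy_bits K p' s"
proof (induction s)
  case (Suc s)
  then have "take s p = take s p'"
    by (metis min.absorb1 le_SucI order_refl take_take)
  with Suc show ?case
    using consistent_cong[of "greedy_bits K p s @ [_]" p p'] by (simp add: Let_def)
qed simp

lemma consistent_snoc: "consistent K p (bs @ [b]) = {y \<in> consistent K p bs. y ! (p ! length bs) = b}"
  unfolding consistent_def by (auto simp: nth_append less_Suc_eq)

lemma card_consistent_snoc:
  assumes "finite K"
  shows "card (consistent K p bs) = card (consistent K p (bs @ [True])) + card (consistent K p (bs @ [False]))"
proof -
  have "finite (consistent K p bs)"
    using assms by (simp add: consistent_def)
  then show ?thesis
    unfolding consistent_snoc by (subst card_Un_disjoint[symmetric]) (auto intro: arg_cong[where f = card])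
qed

lemma card_consistent_greedy_bits:
  assumes "finite K"
  shows "card K \<le> 2 ^ s * card (consistent K p (greedy_bits K p s))"
proof (induction s)
  case 0
  then show ?case by (simp add: consistent_def)
next
  case (Suc s)
  let ?bs = "greedy_bits K p s" and ?C = "\<lambda>bs. card (consistent K p bs)"
  have "?C (greedy_bits K p (Suc s)) = max (?C (?bs @ [False])) (?C (?bs @ [True]))"
    by (simp add: Let_def max_def)
  then have halve: "?C ?bs \<le> 2 * ?C (greedy_bits K p (Suc s))"
    using card_consistent_snoc[OF assms, of p ?bs] by linarith
  have "card K \<le> 2 ^ s * ?C ?bs"
    by (fact Suc.IH)
  also have "\<dots> \<le> 2 ^ Suc s * ?C (greedy_bits K p (Suc s))"
    using halve by simp
  finally show ?case .
qed

lemma nth_greedy_bits: "k < s \<Longrightarrow> greedy_bits K p s ! k = greedy_bits K p (Suc k) ! k"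
  by (metis Suc_leI lessI nth_take take_greedy_bits)

definition greedy_strategy :: "bool list set \<Rightarrow> nat \<Rightarrow> nat list \<Rightarrow> bool" where
  "greedy_strategy K s p = greedy_bits K p s ! (s - 1)"

lemma bob_strategy_greedy: "bob_strategy n (greedy_strategy K)"
  unfolding bob_strategy_def greedy_strategy_def
  by (intro ballI impI arg_cong[where f = "\<lambda>bs. bs ! _"] greedy_bits_cong)

lemma length_clue [simp]: "length (clue n F p z) = n"
  by (simp add: clue_def)

lemma clue_eq_list_update: "clue n F p b = (clue n F p z)[p ! (n - 1) := b]"
  by (rule nth_equalityI) (auto simp: clue_def nth_list_update)

lemma perms_length: "p \<in> perms n \<Longrightarrow> length p = n"
  by (metis distinct_card card_lessThan permutations_of_setD)

lemma perms_nth_less: "p \<in> perms n \<Longrightarrow> k < n \<Longrightarrow> p ! k < n"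
  by (metis lessThan_iff nth_mem perms_length permutations_of_setD(1))

lemma nth_clue_perm:
  assumes p: "p \<in> perms n" and k: "k < n"
  shows "clue n F p z ! (p ! k) = (if k = n - 1 then z else F (Suc k) p)"
proof -
  have dist: "distinct p" and len: "length p = n"
    using p perms_length by (auto simp: permutations_of_set_def)
  have "p ! k < n"
    using p k by (rule perms_nth_less)
  moreover have "p ! k = p ! (n - 1) \<longleftrightarrow> k = n - 1"
    using k by (simp add: nth_eq_iff_index_eq[OF dist] len)
  moreover have "(THE k'. k' < n \<and> p ! k' = p ! k) = k"
    using k by (intro the_equality) (auto simp: nth_eq_iff_index_eq[OF dist] len)
  ultimately show ?thesis
    by (simp add: clue_def)
qed

lemma list_eq_on_perm:
  assumes "p \<in> perms n" "length xs = n" "length ys = n" "\<And>k. k < n \<Longrightarrow> xs ! (p ! k) = ys ! (p ! k)"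
  shows "xs = ys"
proof (rule nth_equalityI)
  fix j assume "j < length xs"
  then have "j \<in> set p"
    using assms(1,2) by (simp add: permutations_of_set_def)
  then obtain k where "k < n" "j = p ! k"
    using perms_length[OF assms(1)] by (auto simp: in_set_conv_nth)
  then show "xs ! j = ys ! j"
    using assms(4) by simp
qed (simp add: assms)

lemma consistent_greedy_bits_subset_clues:
  assumes "p \<in> perms n" "K \<subseteq> {y. length y = n}"
  shows "consistent K p (greedy_bits K p (n - 1)) \<subseteq> range (clue n (greedy_strategy K) p)"
proof
  fix y assume y: "y \<in> consistent K p (greedy_bits K p (n - 1))"
  have agree: "y ! (p ! k) = clue n (greedy_strategy K) p (y ! (p ! (n - 1))) ! (p ! k)"
    if "k < n" for k
  proof (cases "k = n - 1")
    case False
    then have "k < n - 1"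
      using that by simp
    then have "greedy_strategy K (Suc k) p = greedy_bits K p (n - 1) ! k"
      unfolding greedy_strategy_def using nth_greedy_bits[OF \<open>k < n - 1\<close>] by simp
    moreover have "y ! (p ! k) = greedy_bits K p (n - 1) ! k"
      using y \<open>k < n - 1\<close> by (simp add: consistent_def)
    ultimately show ?thesis
      using nth_clue_perm[OF assms(1) that] False by simp
  next
    case True
    then show ?thesis
      using nth_clue_perm[OF assms(1) that] by simp
  qed
  have "length y = n"
    using y assms(2) by (auto simp: consistent_def)
  then have "y = clue n (greedy_strategy K) p (y ! (p ! (n - 1)))"
    using list_eq_on_perm[OF assms(1) _ length_clue agree] by blast
  then show "y \<in> range (clue n (greedy_strategy K) p)"
    by (rule range_eqI)
qed

lemma clue_greedy_strategy_mem:
  assumes "finite K" "K \<subseteq> {y. length y = n}" "card K > 2 ^ (n - 1)" "p \<in> perms n"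
  shows "clue n (greedy_strategy K) p b \<in> K"
proof -
  let ?C = "consistent K p (greedy_bits K p (n - 1))"
  let ?Z = "range (clue n (greedy_strategy K) p)"
  have "2 ^ (n - 1) < 2 ^ (n - 1) * card ?C"
    using card_consistent_greedy_bits[OF assms(1), of "n - 1" p] assms(3) by linarith
  then have "2 \<le> card ?C"
    by simp
  moreover have sub: "?C \<subseteq> ?Z"
    using consistent_greedy_bits_subset_clues[OF assms(4,2)] .
  moreover have Z: "?Z = {clue n (greedy_strategy K) p True, clue n (greedy_strategy K) p False}"
    using UNIV_bool by auto
  moreover have "card ?Z \<le> 2"
    by (simp add: Z card_insert_if)
  moreover have "card ?C \<le> card ?Z"
    using sub by (intro card_mono) (simp_all add: Z)
  ultimately have "?C = ?Z"
    by (intro card_subset_eq) (simp_all add: Z)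
  then show ?thesis
    by (auto simp: consistent_def)
qed

lemma prob_queried_last_greedy_strategy:
  assumes "finite K" "K \<subseteq> {y. length y = n}" "card K > 2 ^ (n - 1)"
    and "\<forall>y \<in> K. c \<le> measure_pmf.prob R {T. eval T y = par y}"
    and "p \<in> perms n" "n > 0"
  shows "2 * c - 1 \<le> measure_pmf.prob R {T. p ! (n - 1) \<in> queried T (clue n (greedy_strategy K) p z)}"
proof -
  let ?F = "greedy_strategy K"
  let ?i = "p ! (n - 1)" and ?y = "clue n ?F p z"
  have i: "?i < length ?y"
    using perms_nth_less[OF assms(5)] assms(6) by simp
  have "?y ! ?i = z"
    using nth_clue_perm[OF assms(5), of "n - 1"] assms(6) by simp
  then have flip: "?y[?i := \<not> ?y ! ?i] = clue n ?F p (\<not> z)"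
    by (simp add: clue_eq_list_update[of n ?F p "\<not> z" z])
  have "clue n ?F p b \<in> K" for b
    using assms(1-3,5) by (rule clue_greedy_strategy_mem)
  then have correct: "c \<le> measure_pmf.prob R {T. eval T (clue n ?F p b) = par (clue n ?F p b)}" for b
    using assms(4) by blast
  show ?thesis
    using prob_queried_ge_sensitive[OF i, of R] correct[of z] correct[of "\<not> z"]
    unfolding flip by linarith
qed

lemma finite_lists_length: "finite {y :: bool list. length y = n}"
  using finite_lists_length_eq[of "UNIV :: bool set" n] by simp

theorem theorem2:
  fixes n t :: nat and R :: "dtree pmf" and K :: "bool list set"
  assumes "n > 1" and "0 < t" and "t \<le> n"
    and "rand_alg n t R"
    and "K \<subseteq> {y. length y = n}" and "card K > 2 ^ (n - 1)"
    and "\<forall>y \<in> K. measure_pmf.prob R {T. eval T y = par y} \<ge> 2/3"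
  shows "\<exists>F. bob_strategy n F \<and>
           measure_pmf.prob
             (pmf_of_set (perms n \<times> (UNIV :: bool set)) \<bind>
                (\<lambda>(\<pi>, z). map_pmf (\<lambda>T. (\<pi>, z, T)) R))
             {(\<pi>, z, T). \<pi> ! (n - 1) \<in> queried T (clue n F \<pi> z)} \<ge> 1/3"
proof (intro exI conjI measure_bind_pmf_ge)
  show "bob_strategy n (greedy_strategy K)"
    by (fact bob_strategy_greedy)
  fix x assume "x \<in> set_pmf (pmf_of_set (perms n \<times> (UNIV :: bool set)))"
  then obtain p z where x: "x = (p, z)" and p: "p \<in> perms n"
    by (cases x) (simp add: set_pmf_of_set)
  have "2 * (2/3) - 1 \<le> measure_pmf.prob R
          {T. p ! (n - 1) \<in> queried T (clue n (greedy_strategy K) p z)}"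
    using finite_subset[OF assms(5) finite_lists_length] assms(5-7) p assms(1)
    by (intro prob_queried_last_greedy_strategy) simp_all
  then show "1/3 \<le> measure_pmf.prob ((\<lambda>(\<pi>, z). map_pmf (\<lambda>T. (\<pi>, z, T)) R) x)
                 {(\<pi>, z, T). \<pi> ! (n - 1) \<in> queried T (clue n (greedy_strategy K) \<pi> z)}"
    by (simp add: x vimage_def)
qed

end
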